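(* Let $n,k\in\mathbb{N}$. A class of finite graphs all of which have $n$-depth tree-width at most $k$ is $\mathrm{MSO}_2$-orderable if, and only if, it is finite (up to isomorphism). Consequently, the class of all finite graphs of $n$-depth tree-width at most $k$ is hereditarily $\mathrm{MSO}_2$-unorderable.
   Context: Graphs are finite, simple, undirected. A graph has $n$-depth tree-width at most $k$ if it has a tree decomposition of width at most $k$ (all bags of size at most $k+1$) whose index tree is rooted and has height at most $n$. For $G=\langle V,E\rangle$, $\lceil G\rceil=\langle V\cup E,\mathrm{inc}\rangle$ (universe $V\cup E$, incidence relation). An MSO-formula $\varphi(x,y;Z_0,\dots,Z_{m-1})$ defines an order on a class $\mathcal{C}$ of structures if for every non-empty $\mathfrak{A}\in\mathcal{C}$ there are $P_0,\dots,P_{m-1}\subseteq A$ with $\{(a,b):\mathfrak{A}\models\varphi(a,b;\bar P)\}$ a linear order on $A$; a graph class is $\mathrm{MSO}_2$-orderable if some MSO-formula defines an order on $\{\lceil G\rceil\}$. A class is hereditarily $\mathrm{MSO}_2$-unorderable if it is infinite (up to isomorphism) and no infinite subclass is $\mathrm{MSO}_2$-orderable. *)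

theory Defs
  imports Main
begin

type_synonym 'v graph = "'v set \<times> 'v set set"

definition is_graph :: "'v graph \<Rightarrow> bool" where
  "is_graph G \<longleftrightarrow> finite (fst G) \<and>
     (\<forall>e\<in>snd G. \<exists>u v. u \<noteq> v \<and> e = {u, v} \<and> u \<in> fst G \<and> v \<in> fst G)"

definition graph_iso :: "'v graph \<Rightarrow> 'w graph \<Rightarrow> bool" where
  "graph_iso G H \<longleftrightarrow> (\<exists>f. bij_betw f (fst G) (fst H) \<and>
     (\<forall>u\<in>fst G. \<forall>v\<in>fst G. {u, v} \<in> snd G \<longleftrightarrow> {f u, f v} \<in> snd H))"

definition finite_upto_iso :: "'v graph set \<Rightarrow> bool" where
  "finite_upto_iso C \<longleftrightarrow> (\<exists>F :: 'v graph set. finite F \<and> (\<forall>G\<in>C. \<exists>H\<in>F. graph_iso G H))"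

text \<open>A rooted tree with node set T, root r and parent function par, of height at most n:
  every node reaches the root in at most n parent steps (height = number of edges of a
  longest root-leaf path).\<close>
definition rooted_tree_height :: "nat set \<Rightarrow> nat \<Rightarrow> (nat \<Rightarrow> nat) \<Rightarrow> nat \<Rightarrow> bool" where
  "rooted_tree_height T r par n \<longleftrightarrow> finite T \<and> r \<in> T \<and>
     (\<forall>t\<in>T - {r}. par t \<in> T) \<and>
     (\<forall>t\<in>T. \<exists>d\<le>n. (par ^^ d) t = r)"

definition tree_adj :: "nat \<Rightarrow> (nat \<Rightarrow> nat) \<Rightarrow> nat \<Rightarrow> nat \<Rightarrow> bool" where
  "tree_adj r par s t \<longleftrightarrow> (s \<noteq> r \<and> par s = t) \<or> (t \<noteq> r \<and> par t = s)"

definition tree_connected :: "nat \<Rightarrow> (nat \<Rightarrow> nat) \<Rightarrow> nat set \<Rightarrow> bool" where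
  "tree_connected r par S \<longleftrightarrow>
     (\<forall>s\<in>S. \<forall>t\<in>S. (s, t) \<in> {(a, b). a \<in> S \<and> b \<in> S \<and> tree_adj r par a b}\<^sup>*)"

definition tree_decomposition ::
  "'v graph \<Rightarrow> nat set \<Rightarrow> nat \<Rightarrow> (nat \<Rightarrow> nat) \<Rightarrow> (nat \<Rightarrow> 'v set) \<Rightarrow> bool" where
  "tree_decomposition G T r par bag \<longleftrightarrow>
     (\<forall>t\<in>T. bag t \<subseteq> fst G) \<and>
     (\<forall>v\<in>fst G. \<exists>t\<in>T. v \<in> bag t) \<and>
     (\<forall>e\<in>snd G. \<exists>t\<in>T. e \<subseteq> bag t) \<and>
     (\<forall>v\<in>fst G. tree_connected r par {t\<in>T. v \<in> bag t})"

definition depth_tw_le :: "nat \<Rightarrow> nat \<Rightarrow> 'v graph \<Rightarrow> bool" where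
  "depth_tw_le n k G \<longleftrightarrow> (\<exists>T r par bag. rooted_tree_height T r par n \<and>
     tree_decomposition G T r par bag \<and> (\<forall>t\<in>T. card (bag t) \<le> k + 1))"

datatype mso =
    Rel nat nat
  | Eq nat nat
  | Mem nat nat
  | Neg mso
  | Conj mso mso
  | Ex1 nat mso
  | Ex2 nat mso

fun free1 :: "mso \<Rightarrow> nat set" where
  "free1 (Rel i j) = {i, j}"
| "free1 (Eq i j) = {i, j}"
| "free1 (Mem i j) = {i}"
| "free1 (Neg \<phi>) = free1 \<phi>"
| "free1 (Conj \<phi> \<psi>) = free1 \<phi> \<union> free1 \<psi>"
| "free1 (Ex1 i \<phi>) = free1 \<phi> - {i}"
| "free1 (Ex2 i \<phi>) = free1 \<phi>"

fun sat :: "'a set \<Rightarrow> ('a \<Rightarrow> 'a \<Rightarrow> bool) \<Rightarrow> (nat \<Rightarrow> 'a) \<Rightarrow> (nat \<Rightarrow> 'a set) \<Rightarrow> mso \<Rightarrow> bool" where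
  "sat A R f F (Rel i j) = R (f i) (f j)"
| "sat A R f F (Eq i j) = (f i = f j)"
| "sat A R f F (Mem i j) = (f i \<in> F j)"
| "sat A R f F (Neg \<phi>) = (\<not> sat A R f F \<phi>)"
| "sat A R f F (Conj \<phi> \<psi>) = (sat A R f F \<phi> \<and> sat A R f F \<psi>)"
| "sat A R f F (Ex1 i \<phi>) = (\<exists>a\<in>A. sat A R (f(i := a)) F \<phi>)"
| "sat A R f F (Ex2 i \<phi>) = (\<exists>P. P \<subseteq> A \<and> sat A R f (F(i := P)) \<phi>)"

definition defines_order :: "mso \<Rightarrow> ('a set \<times> ('a \<Rightarrow> 'a \<Rightarrow> bool)) set \<Rightarrow> bool" where
  "defines_order \<phi> K \<longleftrightarrow> free1 \<phi> \<subseteq> {0, 1} \<and>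
     (\<forall>(A, R)\<in>K. A \<noteq> {} \<longrightarrow>
        (\<exists>P. (\<forall>i. P i \<subseteq> A) \<and>
           linear_order_on A {(a, b). a \<in> A \<and> b \<in> A \<and>
              sat A R (\<lambda>i. if i = 0 then a else b) P \<phi>}))"

definition inc_struct :: "'v graph \<Rightarrow> ('v + 'v set) set \<times> (('v + 'v set) \<Rightarrow> ('v + 'v set) \<Rightarrow> bool)" where
  "inc_struct G = (Inl ` fst G \<union> Inr ` snd G,
     (\<lambda>x y. \<exists>v e. x = Inl v \<and> y = Inr e \<and> v \<in> e))"

definition MSO2_orderable :: "'v graph set \<Rightarrow> bool" where
  "MSO2_orderable C \<longleftrightarrow> (\<exists>\<phi>. defines_order \<phi> (inc_struct ` C))"

definition hereditarily_MSO2_unorderable :: "'v graph set \<Rightarrow> bool" where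
  "hereditarily_MSO2_unorderable C \<longleftrightarrow> \<not> finite_upto_iso C \<and>
     (\<forall>C'\<subseteq>C. \<not> finite_upto_iso C' \<longrightarrow> \<not> MSO2_orderable C')"

end

theory Submission
  imports Defs "HOL-Library.Countable" "HOL-Library.FuncSet"
begin

(* Orderable implies finite: suppose phi(x, y; Z_0, ...) defines a linear order on the incidence
   structures of a class C of graphs of n-depth tree-width at most k.  For a graph G in C fix
   the parameter sets P_j; colour each vertex and edge by its membership vector in the P_j.
   Every colour-preserving automorphism of G lifts to an automorphism of the incidence
   structure fixing the P_j, hence preserves the defined order and is the identity: the
   coloured graph is rigid, with at most 2^m colours.  A tree decomposition of height n gives
   a recursive separator decomposition of depth n with separators of size at most k + 1.
   By induction on the depth, rigid coloured graphs with such a decomposition and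
   finitely many colours have bounded size: recolour every branch by the adjacency of its
   vertices to the separator; each branch is then rigid (hence small by induction), and no
   two branches are isomorphic (otherwise swapping them is an automorphism), so there are
   boundedly many branches.  Bounded size gives finitely many isomorphism types.

   Finite implies orderable: the sets Z_j = "first j + 1 elements of an enumeration" define
   the enumeration order on every incidence structure of bounded size.

   The edgeless graphs have 1-depth tree-width 0 and form an infinite class, which yields the
   hereditary unorderability statement. *)

fun free_set_vars :: "mso \<Rightarrow> nat set" where
  "free_set_vars (Rel i j) = {}"
| "free_set_vars (Eq i j) = {}"
| "free_set_vars (Mem i j) = {j}"
| "free_set_vars (Neg \<phi>) = free_set_vars \<phi>"
| "free_set_vars (Conj \<phi> \<psi>) = free_set_vars \<phi> \<union> free_set_vars \<psi>"
| "free_set_vars (Ex1 i \<phi>) = free_set_vars \<phi>"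
| "free_set_vars (Ex2 i \<phi>) = free_set_vars \<phi> - {i}"

lemma finite_free_set_vars: "finite (free_set_vars \<phi>)"
  by (induction \<phi>) auto

lemma sat_set_vars_cong:
  "\<forall>j\<in>free_set_vars \<phi>. F j = F' j \<Longrightarrow> sat A R f F \<phi> = sat A R f F' \<phi>"
proof (induction \<phi> arbitrary: f F F')
  case (Ex2 i \<phi>)
  then have "sat A R f (F(i := P)) \<phi> = sat A R f (F'(i := P)) \<phi>" for P
    by (intro Ex2.IH) auto
  then show ?case by simp
next
  case (Conj \<phi> \<psi>)
  then have "sat A R f F \<phi> = sat A R f F' \<phi>" "sat A R f F \<psi> = sat A R f F' \<psi>"
    by (intro Conj.IH; simp)+
  then show ?case by simp
qed auto

lemma ex_subset_image:
  assumes "bij_betw \<sigma> A A'"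
  shows "(\<exists>Q. Q \<subseteq> A' \<and> P Q) \<longleftrightarrow> (\<exists>Q. Q \<subseteq> A \<and> P (\<sigma> ` Q))"
  using assms unfolding bij_betw_def by (metis subset_image_iff)

lemma sat_iso:
  assumes bij: "bij_betw \<sigma> A A'" and rel: "\<forall>x\<in>A. \<forall>y\<in>A. R' (\<sigma> x) (\<sigma> y) = R x y"
  shows "\<forall>i. f i \<in> A \<Longrightarrow> \<forall>j. F j \<subseteq> A \<Longrightarrow>
    sat A' R' (\<sigma> \<circ> f) (\<lambda>j. \<sigma> ` F j) \<phi> = sat A R f F \<phi>"
proof (induction \<phi> arbitrary: f F)
  case (Rel i j)
  then show ?case using rel by simp
next
  case (Eq i j)
  then show ?case using bij by (auto simp: bij_betw_def inj_on_def)
next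
  case (Mem i j)
  then show ?case using bij inj_on_image_mem_iff[of \<sigma> A "f i" "F j"] by (simp add: bij_betw_def)
next
  case (Ex1 i \<phi>)
  have IH: "sat A' R' ((\<sigma> \<circ> f)(i := \<sigma> a)) (\<lambda>j. \<sigma> ` F j) \<phi> = sat A R (f(i := a)) F \<phi>"
    if "a \<in> A" for a
  proof -
    have "(\<sigma> \<circ> f)(i := \<sigma> a) = \<sigma> \<circ> f(i := a)" by auto
    then show ?thesis using Ex1 that by (simp only:) (rule Ex1.IH; simp)
  qed
  have "A' = \<sigma> ` A" using bij by (simp add: bij_betw_def)
  then show ?case by (simp only: sat.simps) (use IH in blast)
next
  case (Ex2 i \<phi>)
  have IH: "sat A' R' (\<sigma> \<circ> f) ((\<lambda>j. \<sigma> ` F j)(i := \<sigma> ` Q)) \<phi> = sat A R f (F(i := Q)) \<phi>"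
    if "Q \<subseteq> A" for Q
  proof -
    have "(\<lambda>j. \<sigma> ` F j)(i := \<sigma> ` Q) = (\<lambda>j. \<sigma> ` (F(i := Q)) j)" by (rule ext) simp
    then show ?thesis using Ex2 that by (simp only:) (rule Ex2.IH; simp)
  qed
  show ?case by (simp only: sat.simps ex_subset_image[OF bij]) (use IH in blast)
qed auto

text \<open>In a finite linear order an element is determined by its number of predecessors;
  hence the only order-preserving permutation is the identity.\<close>
lemma linear_order_down_set_card_less:
  assumes "finite A" "linear_order_on A L" "x \<in> A" "y \<in> A" "(x, y) \<in> L" "x \<noteq> y"
  shows "card {z\<in>A. (z, x) \<in> L} < card {z\<in>A. (z, y) \<in> L}"
proof (rule psubset_card_mono)
  show "finite {z\<in>A. (z, y) \<in> L}" using assms(1) by simp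
  have "trans L" "antisym L" "refl_on A L"
    using assms(2) by (auto simp: linear_order_on_def partial_order_on_def preorder_on_def)
  then have "{z\<in>A. (z, x) \<in> L} \<subseteq> {z\<in>A. (z, y) \<in> L}"
    and "y \<in> {z\<in>A. (z, y) \<in> L}" and "y \<notin> {z\<in>A. (z, x) \<in> L}"
    using assms(3-6) by (auto simp: refl_on_def dest: transD antisymD)
  then show "{z\<in>A. (z, x) \<in> L} \<subset> {z\<in>A. (z, y) \<in> L}" by blast
qed

lemma linear_order_automorphism_id:
  assumes fin: "finite A" and lin: "linear_order_on A L" and bij: "bij_betw \<sigma> A A"
    and pres: "\<forall>a\<in>A. \<forall>b\<in>A. (\<sigma> a, \<sigma> b) \<in> L \<longleftrightarrow> (a, b) \<in> L"
    and a: "a \<in> A"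
  shows "\<sigma> a = a"
proof (rule ccontr)
  define down where "down x = {z\<in>A. (z, x) \<in> L}" for x
  have "\<sigma> ` down a = down (\<sigma> a)"
  proof
    show "\<sigma> ` down a \<subseteq> down (\<sigma> a)" using bij pres a by (auto simp: down_def bij_betw_def)
    show "down (\<sigma> a) \<subseteq> \<sigma> ` down a"
    proof
      fix y assume "y \<in> down (\<sigma> a)"
      then have y: "y \<in> A" "(y, \<sigma> a) \<in> L" by (auto simp: down_def)
      obtain z where z: "z \<in> A" "y = \<sigma> z" using bij y(1) by (auto simp: bij_betw_def)
      then have "(z, a) \<in> L" using pres y a by auto
      then show "y \<in> \<sigma> ` down a" using z by (auto simp: down_def)
    qed
  qed
  moreover have "inj_on \<sigma> (down a)" using bij by (auto simp: bij_betw_def down_def inj_on_def)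
  ultimately have same: "card (down (\<sigma> a)) = card (down a)" by (metis card_image)
  assume ne: "\<sigma> a \<noteq> a"
  have "\<sigma> a \<in> A" using bij a by (auto simp: bij_betw_def)
  then have "(a, \<sigma> a) \<in> L \<or> (\<sigma> a, a) \<in> L"
    using lin a ne by (auto simp: linear_order_on_def total_on_def)
  then show False
    using linear_order_down_set_card_less[OF fin lin a \<open>\<sigma> a \<in> A\<close>]
      linear_order_down_set_card_less[OF fin lin \<open>\<sigma> a \<in> A\<close> a] ne same
    unfolding down_def by auto
qed

definition colours_in :: "nat set \<Rightarrow> 'v set \<Rightarrow> 'v set set \<Rightarrow> ('v + 'v set \<Rightarrow> nat) \<Rightarrow> bool" where
  "colours_in K V E col \<longleftrightarrow> (\<forall>v\<in>V. col (Inl v) \<in> K) \<and> (\<forall>e\<in>E. col (Inr e) \<in> K)"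

definition edge_colour :: "'v set set \<Rightarrow> ('v + 'v set \<Rightarrow> nat) \<Rightarrow> 'v \<Rightarrow> 'v \<Rightarrow> nat option" where
  "edge_colour E col u v = (if {u, v} \<in> E then Some (col (Inr {u, v})) else None)"

definition coloured_aut :: "'v set \<Rightarrow> 'v set set \<Rightarrow> ('v + 'v set \<Rightarrow> nat) \<Rightarrow> ('v \<Rightarrow> 'v) \<Rightarrow> bool" where
  "coloured_aut V E col f \<longleftrightarrow> bij_betw f V V \<and> (\<forall>v\<in>V. col (Inl (f v)) = col (Inl v)) \<and>
     (\<forall>u\<in>V. \<forall>v\<in>V. edge_colour E col (f u) (f v) = edge_colour E col u v)"

definition rigid :: "'v set \<Rightarrow> 'v set set \<Rightarrow> ('v + 'v set \<Rightarrow> nat) \<Rightarrow> bool" where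
  "rigid V E col \<longleftrightarrow> (\<forall>f. coloured_aut V E col f \<longrightarrow> (\<forall>v\<in>V. f v = v))"

lemma edge_colour_sym: "edge_colour E col u v = edge_colour E col v u"
  by (simp add: edge_colour_def insert_commute)

text \<open>Encoding pairs as naturals keeps colours in \<open>nat\<close>.\<close>
definition sep_colour :: "'v set set \<Rightarrow> ('v + 'v set \<Rightarrow> nat) \<Rightarrow> 'v list \<Rightarrow> 'v \<Rightarrow> nat" where
  "sep_colour E col bs u = to_nat (col (Inl u), map (edge_colour E col u) bs)"

definition part_colouring :: "'v set set \<Rightarrow> ('v + 'v set \<Rightarrow> nat) \<Rightarrow> 'v list \<Rightarrow> 'v + 'v set \<Rightarrow> nat" where
  "part_colouring E col bs x = (case x of Inl u \<Rightarrow> sep_colour E col bs u | Inr e \<Rightarrow> col (Inr e))"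

definition part_iso ::
  "'v set set \<Rightarrow> ('v + 'v set \<Rightarrow> nat) \<Rightarrow> 'v list \<Rightarrow> 'v set \<Rightarrow> 'v set \<Rightarrow> ('v \<Rightarrow> 'v) \<Rightarrow> bool" where
  "part_iso E col bs p q g \<longleftrightarrow> bij_betw g p q \<and>
     (\<forall>u\<in>p. sep_colour E col bs (g u) = sep_colour E col bs u) \<and>
     (\<forall>u\<in>p. \<forall>v\<in>p. edge_colour E col (g u) (g v) = edge_colour E col u v)"

lemma sep_colour_eqD:
  assumes "sep_colour E col bs x = sep_colour E col bs y"
  shows "col (Inl x) = col (Inl y)" and "b \<in> set bs \<Longrightarrow> edge_colour E col x b = edge_colour E col y b"
  using assms by (auto simp: sep_colour_def)

lemma part_iso_cong: "part_iso E col bs p q g \<Longrightarrow> \<forall>x\<in>p. g x = g' x \<Longrightarrow> part_iso E col bs p q g'"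
  unfolding part_iso_def by (auto cong: bij_betw_cong)

lemma part_iso_id: "part_iso E col bs p p (\<lambda>x. x)"
  by (simp add: part_iso_def bij_betw_def)

lemma part_iso_inv:
  assumes "part_iso E col bs p q g"
  shows "part_iso E col bs q p (inv_into p g)"
proof -
  have g: "bij_betw g p q" using assms by (simp add: part_iso_def)
  have inv: "inv_into p g x \<in> p" "g (inv_into p g x) = x" if "x \<in> q" for x
    using g that by (auto simp: bij_betw_def inv_into_into f_inv_into_f)
  show ?thesis
    using assms bij_betw_inv_into[OF g] unfolding part_iso_def by (metis inv)
qed

lemma coloured_aut_part_iso:
  assumes "coloured_aut p {e\<in>E. e \<subseteq> p} (part_colouring E col bs) g"
  shows "part_iso E col bs p p g"
proof -
  have g: "bij_betw g p p" using assms by (simp add: coloured_aut_def)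
  have "edge_colour {e\<in>E. e \<subseteq> p} (part_colouring E col bs) x y = edge_colour E col x y"
    if "x \<in> p" "y \<in> p" for x y using that by (simp add: edge_colour_def part_colouring_def)
  moreover have "g x \<in> p" if "x \<in> p" for x using g that by (auto simp: bij_betw_def)
  ultimately show ?thesis
    using assms by (simp add: coloured_aut_def part_iso_def part_colouring_def)
qed

lemma bij_betw_extend_id:
  assumes "bij_betw g p p" "p \<subseteq> V"
  shows "bij_betw (\<lambda>x. if x \<in> p then g x else x) V V"
proof -
  have "bij_betw (\<lambda>x. if x \<in> p then g x else x) (p \<union> (V - p)) (p \<union> (V - p))"
    by (rule bij_betw_disjoint_Un[OF assms(1)]) (auto simp: bij_betw_def)
  moreover have "p \<union> (V - p) = V" using assms(2) by blast
  ultimately show ?thesis by simp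
qed

lemma bij_betw_swap_parts:
  assumes "bij_betw g p q" "p \<subseteq> V" "q \<subseteq> V" "p \<inter> q = {}"
  shows "bij_betw (\<lambda>x. if x \<in> p then g x else if x \<in> q then inv_into p g x else x) V V"
proof -
  have inner: "bij_betw (\<lambda>x. if x \<in> q then inv_into p g x else x) (q \<union> (V - p - q)) (p \<union> (V - p - q))"
    by (rule bij_betw_disjoint_Un[OF bij_betw_inv_into[OF assms(1)]]) (auto simp: bij_betw_def)
  have "bij_betw (\<lambda>x. if x \<in> p then g x else if x \<in> q then inv_into p g x else x)
      (p \<union> (q \<union> (V - p - q))) (q \<union> (p \<union> (V - p - q)))"
    by (rule bij_betw_disjoint_Un[OF assms(1) inner]) (use assms(4) in auto)
  moreover have "p \<union> (q \<union> (V - p - q)) = V" "q \<union> (p \<union> (V - p - q)) = V" using assms by auto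
  ultimately show ?thesis by simp
qed

locale separation =
  fixes V :: "'v set" and E :: "'v set set" and col :: "'v + 'v set \<Rightarrow> nat"
    and B :: "'v set" and P :: "'v set set" and bs :: "'v list"
  assumes B_sub: "B \<subseteq> V" and parts_cover: "\<Union>P = V - B"
    and parts_disjoint: "\<forall>p\<in>P. \<forall>q\<in>P. p \<noteq> q \<longrightarrow> p \<inter> q = {}"
    and parts_nonempty: "\<forall>p\<in>P. p \<noteq> {}"
    and edges_local: "\<forall>e\<in>E. e \<subseteq> B \<or> (\<exists>p\<in>P. e \<subseteq> B \<union> p)"
    and bs_B: "set bs = B"
begin

lemma part_sub: "p \<in> P \<Longrightarrow> p \<subseteq> V - B"
  using parts_cover by blast

lemma same_part: "p \<in> P \<Longrightarrow> q \<in> P \<Longrightarrow> x \<in> p \<Longrightarrow> x \<in> q \<Longrightarrow> p = q"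
  using parts_disjoint by blast

lemma no_edge_between_parts:
  assumes "p \<in> P" "q \<in> P" "p \<noteq> q" "u \<in> p" "v \<in> q"
  shows "edge_colour E col u v = None"
proof (rule ccontr)
  assume "edge_colour E col u v \<noteq> None"
  then have e: "{u, v} \<in> E" by (auto simp: edge_colour_def split: if_splits)
  have "u \<notin> B" "v \<notin> B" using part_sub assms by auto
  then obtain r where "r \<in> P" "{u, v} \<subseteq> B \<union> r" using edges_local e by blast
  then have "u \<in> r" "v \<in> r" "r \<in> P" using \<open>u \<notin> B\<close> \<open>v \<notin> B\<close> by auto
  then show False using same_part assms by metis
qed

text \<open>A permutation mapping parts isomorphically onto parts preserves adjacency between
  vertices of parts: within one part by the isomorphism, across two parts because their
  images are again two different parts, between which there are no edges.\<close>
lemma part_isos_preserve_edge_colour: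
  assumes bij: "bij_betw \<rho> V V" and iso: "\<forall>p\<in>P. \<exists>q\<in>P. part_iso E col bs p q \<rho>"
    and p: "p \<in> P" and p': "p' \<in> P" and u: "u \<in> p" and v: "v \<in> p'"
  shows "edge_colour E col (\<rho> u) (\<rho> v) = edge_colour E col u v"
proof -
  obtain q where q: "q \<in> P" "part_iso E col bs p q \<rho>" using iso p by blast
  obtain q' where q': "q' \<in> P" "part_iso E col bs p' q' \<rho>" using iso p' by blast
  have \<rho>q: "bij_betw \<rho> p q" and \<rho>q': "bij_betw \<rho> p' q'"
    using q(2) q'(2) by (simp_all add: part_iso_def)
  show ?thesis
  proof (cases "p = p'")
    case True
    then show ?thesis using q(2) u v by (simp add: part_iso_def)
  next
    case False
    have "q \<noteq> q'"
    proof
      assume "q = q'"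
      then have "\<rho> v \<in> \<rho> ` p" using bij_betw_apply[OF \<rho>q' v] bij_betw_imp_surj_on[OF \<rho>q] by simp
      then obtain u' where u': "u' \<in> p" "\<rho> u' = \<rho> v" by (metis imageE)
      have "u' \<in> V" "v \<in> V" using u' v p p' part_sub by auto
      then have "u' = v" using u' bij by (metis bij_betw_def inj_on_eq_iff)
      then show False using same_part[OF p p'] u' v False by simp
    qed
    then show ?thesis
      using no_edge_between_parts[OF q(1) q'(1) _ bij_betw_apply[OF \<rho>q u] bij_betw_apply[OF \<rho>q' v]]
        no_edge_between_parts[OF p p' False u v]
      by simp
  qed
qed

lemma glue:
  assumes bij: "bij_betw \<rho> V V" and fix_B: "\<forall>b\<in>B. \<rho> b = b"
    and iso: "\<forall>p\<in>P. \<exists>q\<in>P. part_iso E col bs p q \<rho>"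
  shows "coloured_aut V E col \<rho>"
proof -
  have sep: "sep_colour E col bs (\<rho> u) = sep_colour E col bs u" if "p \<in> P" "u \<in> p" for u p
    using iso that by (auto simp: part_iso_def)
  have to_sep: "edge_colour E col (\<rho> u) (\<rho> b) = edge_colour E col u b"
    if "p \<in> P" "u \<in> p" "b \<in> B" for u b p
    using sep_colour_eqD(2)[OF sep[OF that(1,2)]] fix_B bs_B that(3) by simp
  have "col (Inl (\<rho> v)) = col (Inl v)" if vV: "v \<in> V" for v
  proof (cases "v \<in> B")
    case True
    then show ?thesis using fix_B by simp
  next
    case False
    then obtain p where "p \<in> P" "v \<in> p" using vV parts_cover by blast
    then show ?thesis by (rule sep_colour_eqD(1)[OF sep])
  qed
  moreover have "edge_colour E col (\<rho> u) (\<rho> v) = edge_colour E col u v"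
    if uV: "u \<in> V" and vV: "v \<in> V" for u v
  proof (cases "u \<in> B"; cases "v \<in> B")
    assume "u \<in> B" "v \<in> B"
    then show ?thesis using fix_B by simp
  next
    assume "u \<in> B" "v \<notin> B"
    then obtain p where "p \<in> P" "v \<in> p" using vV parts_cover by blast
    then show ?thesis using to_sep \<open>u \<in> B\<close> edge_colour_sym by metis
  next
    assume "u \<notin> B" "v \<in> B"
    then obtain p where "p \<in> P" "u \<in> p" using uV parts_cover by blast
    then show ?thesis using to_sep \<open>v \<in> B\<close> by blast
  next
    assume "u \<notin> B" "v \<notin> B"
    then obtain p p' where "p \<in> P" "u \<in> p" "p' \<in> P" "v \<in> p'" using uV vV parts_cover by blast
    then show ?thesis using part_isos_preserve_edge_colour[OF bij iso] by blast
  qed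
  ultimately show ?thesis using bij by (simp add: coloured_aut_def)
qed

text \<open>If the whole coloured graph is rigid, then every part, coloured by its separator
  colours, is rigid: an automorphism of a part extends by the identity.\<close>
lemma rigid_part:
  assumes rigid: "rigid V E col" and p: "p \<in> P"
  shows "rigid p {e\<in>E. e \<subseteq> p} (part_colouring E col bs)"
  unfolding rigid_def
proof (intro allI impI)
  fix g assume "coloured_aut p {e\<in>E. e \<subseteq> p} (part_colouring E col bs) g"
  then have g: "part_iso E col bs p p g" by (rule coloured_aut_part_iso)
  define \<rho> where "\<rho> x = (if x \<in> p then g x else x)" for x
  have "bij_betw \<rho> V V"
    unfolding \<rho>_def using g part_sub[OF p] by (intro bij_betw_extend_id) (auto simp: part_iso_def)
  moreover have "\<forall>b\<in>B. \<rho> b = b" using part_sub[OF p] by (auto simp: \<rho>_def)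
  moreover have "\<forall>r\<in>P. \<exists>q\<in>P. part_iso E col bs r q \<rho>"
  proof
    fix r assume r: "r \<in> P"
    show "\<exists>q\<in>P. part_iso E col bs r q \<rho>"
    proof (cases "r = p")
      case True
      have "part_iso E col bs p p \<rho>" by (rule part_iso_cong[OF g]) (simp add: \<rho>_def)
      then show ?thesis using p True by blast
    next
      case False
      then have "r \<inter> p = {}" using same_part r p by blast
      then have "part_iso E col bs r r \<rho>" by (intro part_iso_cong[OF part_iso_id]) (auto simp: \<rho>_def)
      then show ?thesis using r by blast
    qed
  qed
  ultimately have "coloured_aut V E col \<rho>" by (rule glue)
  then have "\<rho> v = v" if "v \<in> p" for v using rigid part_sub[OF p] that by (auto simp: rigid_def)
  then show "\<forall>v\<in>p. g v = v" by (simp add: \<rho>_def)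
qed

text \<open>If the whole coloured graph is rigid, no two distinct parts are isomorphic: otherwise
  swapping them would be a non-trivial automorphism.\<close>
lemma rigid_parts_not_iso:
  assumes rigid: "rigid V E col" and p: "p \<in> P" and q: "q \<in> P"
    and g: "part_iso E col bs p q g"
  shows "p = q"
proof (rule ccontr)
  assume "p \<noteq> q"
  then have pq: "p \<inter> q = {}" using same_part p q by blast
  define \<rho> where "\<rho> x = (if x \<in> p then g x else if x \<in> q then inv_into p g x else x)" for x
  have "bij_betw \<rho> V V"
    unfolding \<rho>_def using g part_sub p q pq
    by (intro bij_betw_swap_parts) (auto simp: part_iso_def)
  moreover have "\<forall>b\<in>B. \<rho> b = b" using part_sub p q by (auto simp: \<rho>_def)
  moreover have "\<forall>r\<in>P. \<exists>q'\<in>P. part_iso E col bs r q' \<rho>"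
  proof
    fix r assume r: "r \<in> P"
    consider "r = p" | "r = q" | "r \<inter> p = {}" "r \<inter> q = {}"
      using same_part r p q by blast
    then show "\<exists>q'\<in>P. part_iso E col bs r q' \<rho>"
    proof cases
      case 1
      have "part_iso E col bs p q \<rho>" by (rule part_iso_cong[OF g]) (simp add: \<rho>_def)
      then show ?thesis using q 1 by blast
    next
      case 2
      have "part_iso E col bs q p \<rho>" by (rule part_iso_cong[OF part_iso_inv[OF g]]) (use pq in \<open>auto simp: \<rho>_def\<close>)
      then show ?thesis using p 2 by blast
    next
      case 3
      then have "part_iso E col bs r r \<rho>" by (intro part_iso_cong[OF part_iso_id]) (auto simp: \<rho>_def)
      then show ?thesis using r by blast
    qed
  qed
  ultimately have "coloured_aut V E col \<rho>" by (rule glue)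
  moreover obtain x where x: "x \<in> p" using parts_nonempty p by blast
  ultimately have "\<rho> x = x" using rigid part_sub[OF p] by (auto simp: rigid_def)
  moreover have "g x \<in> q" using g x by (auto simp: part_iso_def bij_betw_def)
  ultimately show False using x pq by (auto simp: \<rho>_def)
qed

end

text \<open>Equal codes mean isomorphic parts, and for bounded size and finitely
  many colours there are only finitely many codes.\<close>
definition part_code ::
  "'v set set \<Rightarrow> ('v + 'v set \<Rightarrow> nat) \<Rightarrow> 'v list \<Rightarrow> 'v set \<Rightarrow> nat \<times> (nat \<Rightarrow> nat) \<times> (nat \<times> nat \<Rightarrow> nat option)"
  where
  "part_code E col bs p = (let m = card p; \<beta> = (SOME \<beta>. bij_betw \<beta> {0..<m} p) in
     (m, restrict (\<lambda>i. sep_colour E col bs (\<beta> i)) {0..<m},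
      restrict (\<lambda>(i, j). edge_colour E col (\<beta> i) (\<beta> j)) ({0..<m} \<times> {0..<m})))"

definition code_space :: "nat \<Rightarrow> nat set \<Rightarrow> nat option set \<Rightarrow> (nat \<times> (nat \<Rightarrow> nat) \<times> (nat \<times> nat \<Rightarrow> nat option)) set"
  where
  "code_space N K W = (\<Union>m\<in>{..N}. {m} \<times> ({0..<m} \<rightarrow>\<^sub>E K) \<times> (({0..<m} \<times> {0..<m}) \<rightarrow>\<^sub>E W))"

lemma finite_code_space:
  assumes "finite K" "finite W"
  shows "finite (code_space N K W)"
  unfolding code_space_def using assms by (intro finite_UN_I finite_cartesian_product finite_PiE) auto

lemma part_enumeration:
  assumes "finite p"
  shows "bij_betw (SOME \<beta>. bij_betw \<beta> {0..<card p} p) {0..<card p} p"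
  using someI_ex[OF ex_bij_betw_nat_finite[OF assms]] .

lemma part_code_in_code_space:
  assumes "finite p" "card p \<le> N" "\<forall>u\<in>p. sep_colour E col bs u \<in> K"
    and "\<forall>u v. edge_colour E col u v \<in> W"
  shows "part_code E col bs p \<in> code_space N K W"
proof -
  define \<beta> where "\<beta> = (SOME \<beta>. bij_betw \<beta> {0..<card p} p)"
  have "\<beta> i \<in> p" if "i \<in> {0..<card p}" for i
    using bij_betw_apply[OF part_enumeration[OF assms(1)] that] by (simp add: \<beta>_def)
  then have "restrict (\<lambda>i. sep_colour E col bs (\<beta> i)) {0..<card p} \<in> {0..<card p} \<rightarrow>\<^sub>E K"
    and "restrict (\<lambda>(i, j). edge_colour E col (\<beta> i) (\<beta> j)) ({0..<card p} \<times> {0..<card p})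
      \<in> ({0..<card p} \<times> {0..<card p}) \<rightarrow>\<^sub>E W"
    using assms(3,4) by (auto simp: restrict_PiE_iff)
  then show ?thesis
    using assms(2) unfolding part_code_def code_space_def Let_def \<beta>_def[symmetric] by blast
qed

lemma part_code_eq_iso:
  assumes p: "finite p" and q: "finite q" and eq: "part_code E col bs p = part_code E col bs q"
  shows "\<exists>g. part_iso E col bs p q g"
proof -
  define m where "m = card p"
  define \<beta>p where "\<beta>p = (SOME \<beta>. bij_betw \<beta> {0..<m} p)"
  define \<beta>q where "\<beta>q = (SOME \<beta>. bij_betw \<beta> {0..<m} q)"
  have m: "card q = m" using eq by (simp add: part_code_def Let_def m_def)
  have bp: "bij_betw \<beta>p {0..<m} p" unfolding \<beta>p_def m_def by (rule part_enumeration[OF p])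
  have bq: "bij_betw \<beta>q {0..<m} q" unfolding \<beta>q_def m[symmetric] by (rule part_enumeration[OF q])
  have codes: "restrict (\<lambda>i. sep_colour E col bs (\<beta>p i)) {0..<m} = restrict (\<lambda>i. sep_colour E col bs (\<beta>q i)) {0..<m}"
    "restrict (\<lambda>(i, j). edge_colour E col (\<beta>p i) (\<beta>p j)) ({0..<m} \<times> {0..<m}) =
     restrict (\<lambda>(i, j). edge_colour E col (\<beta>q i) (\<beta>q j)) ({0..<m} \<times> {0..<m})"
    using eq m by (simp_all add: part_code_def Let_def m_def \<beta>p_def \<beta>q_def)
  define idx where "idx = inv_into {0..<m} \<beta>p"
  have idx: "idx u < m" "\<beta>p (idx u) = u" if "u \<in> p" for u
    using bij_betw_inv_into[OF bp] bp that
    by (auto simp: idx_def bij_betw_def f_inv_into_f)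
  have "part_iso E col bs p q (\<beta>q \<circ> idx)"
    unfolding part_iso_def
  proof (intro conjI ballI)
    show "bij_betw (\<beta>q \<circ> idx) p q"
      unfolding idx_def by (rule bij_betw_trans[OF bij_betw_inv_into[OF bp] bq])
  next
    fix u assume "u \<in> p"
    then show "sep_colour E col bs ((\<beta>q \<circ> idx) u) = sep_colour E col bs u"
      using fun_cong[OF codes(1), of "idx u"] idx by simp
  next
    fix u v assume "u \<in> p" "v \<in> p"
    then show "edge_colour E col ((\<beta>q \<circ> idx) u) ((\<beta>q \<circ> idx) v) = edge_colour E col u v"
      using fun_cong[OF codes(2), of "(idx u, idx v)"] idx by simp
  qed
  then show ?thesis by blast
qed

context separation
begin

text \<open>Counting step: in a rigid coloured graph the parts are pairwise non-isomorphic, so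
  their codes are distinct; with boundedly many codes and bounded part sizes, the whole
  graph has bounded size.\<close>
lemma rigid_card_bound:
  assumes rigid: "rigid V E col" and fin: "finite V" and B: "card B \<le> k + 1"
    and fin_K: "finite K" and fin_W: "finite W"
    and small: "\<forall>p\<in>P. card p \<le> N"
    and sep_K: "\<forall>u\<in>V. sep_colour E col bs u \<in> K" and edge_W: "\<forall>u v. edge_colour E col u v \<in> W"
  shows "card V \<le> k + 1 + card (code_space N K W) * N"
proof -
  have fin_part: "finite p" if "p \<in> P" for p
    using part_sub[OF that] by (rule finite_subset) (simp add: fin)
  have "inj_on (part_code E col bs) P"
  proof (rule inj_onI)
    fix p q assume "p \<in> P" "q \<in> P" "part_code E col bs p = part_code E col bs q"
    then obtain g where "part_iso E col bs p q g" using part_code_eq_iso fin_part by blast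
    then show "p = q" using rigid_parts_not_iso[OF rigid \<open>p \<in> P\<close> \<open>q \<in> P\<close>] by blast
  qed
  moreover have "part_code E col bs ` P \<subseteq> code_space N K W"
  proof (rule image_subsetI)
    fix p assume p: "p \<in> P"
    show "part_code E col bs p \<in> code_space N K W"
      using fin_part[OF p] small p sep_K edge_W part_sub[OF p] by (intro part_code_in_code_space) auto
  qed
  ultimately have card_P: "card P \<le> card (code_space N K W)"
    using card_inj_on_le finite_code_space[OF fin_K fin_W] by blast
  have "card V = card B + card (V - B)"
    using fin B_sub by (metis card_Diff_subset card_mono le_add_diff_inverse finite_subset)
  also have "V - B = \<Union>P" using parts_cover by simp
  also have "card (\<Union>P) = (\<Sum>p\<in>P. card p)"
    using fin_part same_part by (intro card_Union_disjoint) (auto simp: pairwise_def disjnt_def)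
  also have "\<dots> \<le> card P * N" using sum_bounded_above[of P card N] small by simp
  also have "\<dots> \<le> card (code_space N K W) * N" using card_P by simp
  finally show ?thesis using B by simp
qed

end

text \<open>Separator decompositions of depth \<open>h\<close> with separators of at most \<open>k + 1\<close> vertices
  (a recursive version of bounded tree-depth).\<close>
fun sep_dec :: "nat \<Rightarrow> nat \<Rightarrow> 'v set \<Rightarrow> 'v set set \<Rightarrow> bool" where
  "sep_dec 0 k V E \<longleftrightarrow> card V \<le> k + 1"
| "sep_dec (Suc h) k V E \<longleftrightarrow> (\<exists>B P. B \<subseteq> V \<and> card B \<le> k + 1 \<and> \<Union>P = V - B \<and> (\<forall>p\<in>P. p \<noteq> {}) \<and>
     (\<forall>p\<in>P. \<forall>q\<in>P. p \<noteq> q \<longrightarrow> p \<inter> q = {}) \<and> (\<forall>e\<in>E. e \<subseteq> B \<or> (\<exists>p\<in>P. e \<subseteq> B \<union> p)) \<and>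
     (\<forall>p\<in>P. sep_dec h k p {e\<in>E. e \<subseteq> p}))"

text \<open>Induction on \<open>h\<close>: the parts, recoloured by their separator
  colours from a larger but still finite set, are rigid and hence small.\<close>
lemma rigid_sep_dec_bounded:
  assumes "finite K"
  shows "\<exists>N. \<forall>(V :: 'v set) E col. finite V \<and> sep_dec h k V E \<and> colours_in K V E col \<and>
    rigid V E col \<longrightarrow> card V \<le> N"
  using assms
proof (induction h arbitrary: K)
  case 0
  show ?case by (intro exI[of _ "k + 1"]) auto
next
  case (Suc h)
  define W where "W = insert None (Some ` K)"
  define K' where "K' = K \<union> to_nat ` (K \<times> {xs :: nat option list. set xs \<subseteq> W \<and> length xs \<le> k + 1})"
  have fin_W: "finite W" using Suc.prems by (simp add: W_def)
  have "finite K'" using Suc.prems fin_W by (auto simp: K'_def intro!: finite_lists_length_le)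
  then obtain N where N: "\<forall>(V :: 'v set) E col. finite V \<and> sep_dec h k V E \<and> colours_in K' V E col \<and>
    rigid V E col \<longrightarrow> card V \<le> N"
    using Suc.IH by blast
  show ?case
  proof (intro exI[of _ "k + 1 + card (code_space N K' W) * N"] allI impI)
    fix V :: "'v set" and E col
    assume H: "finite V \<and> sep_dec (Suc h) k V E \<and> colours_in K V E col \<and> rigid V E col"
    then have fin: "finite V" and col: "colours_in K V E col" and rigid: "rigid V E col" by auto
    obtain B P where B: "B \<subseteq> V" "card B \<le> k + 1" and P: "\<Union>P = V - B" "\<forall>p\<in>P. p \<noteq> {}"
      "\<forall>p\<in>P. \<forall>q\<in>P. p \<noteq> q \<longrightarrow> p \<inter> q = {}" "\<forall>e\<in>E. e \<subseteq> B \<or> (\<exists>p\<in>P. e \<subseteq> B \<union> p)"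
      and dec_P: "\<forall>p\<in>P. sep_dec h k p {e\<in>E. e \<subseteq> p}"
      using H by auto
    obtain bs where bs: "set bs = B" "distinct bs"
      using finite_distinct_list finite_subset[OF B(1) fin] by blast
    interpret separation V E col B P bs
      using B P bs by unfold_locales auto
    have edge_W: "\<forall>u v. edge_colour E col u v \<in> W"
      using col by (auto simp: edge_colour_def W_def colours_in_def)
    have "length bs \<le> k + 1" using bs B distinct_card by fastforce
    then have sep_K': "\<forall>u\<in>V. sep_colour E col bs u \<in> K'"
      using col edge_W unfolding sep_colour_def K'_def colours_in_def
      by (intro ballI UnI2 imageI) auto
    have "card p \<le> N" if p: "p \<in> P" for p
    proof -
      have "finite p" using part_sub[OF p] by (rule finite_subset) (simp add: fin)
      moreover have "colours_in K' p {e\<in>E. e \<subseteq> p} (part_colouring E col bs)"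
        using sep_K' part_sub[OF p] col by (auto simp: colours_in_def part_colouring_def K'_def)
      ultimately show ?thesis using N dec_P p rigid_part[OF rigid p] by blast
    qed
    then show "card V \<le> k + 1 + card (code_space N K' W) * N"
      using rigid_card_bound[OF rigid fin B(2) \<open>finite K'\<close> fin_W _ sep_K' edge_W] by blast
  qed
qed

lemma is_graph_edges: "is_graph (V, E) \<Longrightarrow> e \<in> E \<Longrightarrow> \<exists>u v. u \<noteq> v \<and> e = {u, v} \<and> u \<in> V \<and> v \<in> V"
  by (simp add: is_graph_def)

lemma is_graph_induced:
  assumes "is_graph (V, E)" "p \<subseteq> V"
  shows "is_graph (p, {e\<in>E. e \<subseteq> p})"
  using assms finite_subset unfolding is_graph_def by fastforce

lemma is_graph_Pow: "is_graph (V, E) \<Longrightarrow> E \<subseteq> Pow V"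
  by (auto simp: is_graph_def)

lemma is_graph_card_inc_struct:
  fixes V :: "'v set"
  assumes "is_graph (V, E)"
  shows "card (fst (inc_struct (V, E))) \<le> card V + 2 ^ card V"
proof -
  have fin: "finite V" and EV: "E \<subseteq> Pow V" using assms is_graph_Pow by (auto simp: is_graph_def)
  have "card (fst (inc_struct (V, E))) \<le> card (Inl ` V :: ('v + 'v set) set) + card (Inr ` E :: ('v + 'v set) set)"
    unfolding inc_struct_def fst_conv snd_conv by (rule card_Un_le)
  also have "\<dots> \<le> card V + card E" by (simp add: card_image)
  also have "card E \<le> 2 ^ card V" using card_mono[OF _ EV] fin by (simp add: card_Pow)
  finally show ?thesis by simp
qed

locale rooted_tree =
  fixes T :: "nat set" and r :: nat and par :: "nat \<Rightarrow> nat" and n :: nat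
  assumes rooted: "rooted_tree_height T r par n"
begin

definition depth :: "nat \<Rightarrow> nat" where
  "depth t = (LEAST d. (par ^^ d) t = r)"

definition top :: "nat \<Rightarrow> nat" where
  "top t = (par ^^ (depth t - 1)) t"

lemma root_in: "r \<in> T" and par_in: "t \<in> T \<Longrightarrow> t \<noteq> r \<Longrightarrow> par t \<in> T" and finite_T: "finite T"
  using rooted by (auto simp: rooted_tree_height_def)

lemma depth_props: assumes "t \<in> T" shows "(par ^^ depth t) t = r" "depth t \<le> n"
proof -
  obtain d where d: "d \<le> n" "(par ^^ d) t = r" using rooted assms by (auto simp: rooted_tree_height_def)
  show "(par ^^ depth t) t = r" unfolding depth_def using d(2) by (rule LeastI)
  have "depth t \<le> d" unfolding depth_def using d(2) by (rule Least_le)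
  then show "depth t \<le> n" using d(1) by simp
qed

lemma depth_pos: "t \<in> T \<Longrightarrow> t \<noteq> r \<Longrightarrow> 1 \<le> depth t"
  using depth_props(1)[of t] by (cases "depth t") auto

lemma below_depth: "j < depth t \<Longrightarrow> (par ^^ j) t \<noteq> r"
  unfolding depth_def using not_less_Least by blast

lemma ancestor_in: "t \<in> T \<Longrightarrow> j \<le> depth t \<Longrightarrow> (par ^^ j) t \<in> T"
proof (induction j)
  case (Suc j)
  then have "(par ^^ j) t \<in> T" "(par ^^ j) t \<noteq> r" using below_depth[of j t] by auto
  then show ?case using par_in by simp
qed simp

lemma depth_par:
  assumes "t \<in> T" "t \<noteq> r" "par t \<noteq> r"
  shows "depth (par t) = depth t - 1"
proof -
  have pt: "par t \<in> T" using par_in assms by simp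
  have "(par ^^ (depth t - 1)) (par t) = (par ^^ depth t) t"
    using depth_pos[OF assms(1,2)] by (metis Suc_diff_le diff_Suc_1 funpow_Suc_right o_apply)
  then have "(par ^^ (depth t - 1)) (par t) = r" using depth_props(1)[OF assms(1)] by simp
  then have "depth (par t) \<le> depth t - 1" unfolding depth_def by (rule Least_le)
  moreover have "(par ^^ Suc (depth (par t))) t = r" using depth_props(1)[OF pt] by (simp add: funpow_swap1)
  then have "depth t \<le> Suc (depth (par t))" unfolding depth_def by (rule Least_le)
  ultimately show ?thesis by simp
qed

lemma top_par:
  assumes "t \<in> T" "t \<noteq> r" "par t \<noteq> r"
  shows "top (par t) = top t"
proof -
  have "1 \<le> depth (par t)" using depth_pos par_in assms by simp
  then have "Suc (depth (par t) - 1) = depth t - 1" using depth_par[OF assms] by simp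
  then show ?thesis unfolding top_def by (metis funpow_Suc_right o_apply)
qed

lemma top_props:
  assumes "t \<in> T" "t \<noteq> r"
  shows "top t \<in> T" "top t \<noteq> r" "par (top t) = r"
proof -
  have d: "1 \<le> depth t" using depth_pos assms by simp
  show "top t \<in> T" unfolding top_def using ancestor_in[OF assms(1)] by simp
  show "top t \<noteq> r" unfolding top_def using below_depth d by simp
  have "par (top t) = (par ^^ Suc (depth t - 1)) t" unfolding top_def by simp
  then show "par (top t) = r" using d depth_props(1)[OF assms(1)] by simp
qed

lemma top_child:
  assumes "c \<in> T" "c \<noteq> r" "par c = r"
  shows "top c = c"
proof -
  have "depth c \<le> 1" unfolding depth_def using assms(3) by (intro Least_le) simp
  then have "depth c = 1" using depth_pos[OF assms(1,2)] by simp
  then show ?thesis by (simp add: top_def)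
qed

lemma top_connected:
  assumes S: "S \<subseteq> T - {r}" and st: "(s, t) \<in> {(a, b). a \<in> S \<and> b \<in> S \<and> tree_adj r par a b}\<^sup>*"
  shows "top s = top t"
  using st
proof (induction rule: rtrancl_induct)
  case (step y z)
  then have "y \<in> T - {r}" "z \<in> T - {r}" "tree_adj r par y z" using S by auto
  then have "top y = top z" using top_par unfolding tree_adj_def by (metis DiffE singletonI)
  then show ?case using step by simp
qed simp

end

locale rooted_decomposition = rooted_tree T r par "Suc h"
  for T :: "nat set" and r par h +
  fixes V :: "'v set" and E :: "'v set set" and bag :: "nat \<Rightarrow> 'v set"
  assumes graph: "is_graph (V, E)" and decomp: "tree_decomposition (V, E) T r par bag"
begin

definition branch :: "nat \<Rightarrow> 'v set" where
  "branch c = {v\<in>V - bag r. \<exists>t\<in>T - {r}. top t = c \<and> v \<in> bag t}"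

definition branches :: "'v set set" where
  "branches = {branch c | c. c \<in> T \<and> c \<noteq> r \<and> par c = r} - {{}}"

definition subtree :: "nat \<Rightarrow> nat set" where
  "subtree c = {t\<in>T - {r}. top t = c}"

lemma bags_sub: "t \<in> T \<Longrightarrow> bag t \<subseteq> V"
  and vertex_covered: "v \<in> V \<Longrightarrow> \<exists>t\<in>T. v \<in> bag t"
  and edge_covered: "e \<in> E \<Longrightarrow> \<exists>t\<in>T. e \<subseteq> bag t"
  and bags_connected: "v \<in> V \<Longrightarrow> tree_connected r par {t\<in>T. v \<in> bag t}"
  using decomp by (auto simp: tree_decomposition_def)

lemma branch_sub: "branch c \<subseteq> V - bag r"
  by (auto simp: branch_def)

text \<open>By connectivity of the bags containing \<open>v\<close>, all of them lie in one branch.\<close>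
lemma bag_top:
  assumes v: "v \<in> branch c" and t: "t \<in> T" "v \<in> bag t"
  shows "t \<noteq> r" "top t = c"
proof -
  have vV: "v \<in> V - bag r" using v branch_sub by blast
  then show "t \<noteq> r" using t by auto
  obtain t' where t': "t' \<in> T - {r}" "top t' = c" "v \<in> bag t'" using v by (auto simp: branch_def)
  let ?S = "{t\<in>T. v \<in> bag t}"
  have "?S \<subseteq> T - {r}" using vV by auto
  moreover have "(t, t') \<in> {(a, b). a \<in> ?S \<and> b \<in> ?S \<and> tree_adj r par a b}\<^sup>*"
    using bags_connected vV t t' by (auto simp: tree_connected_def)
  ultimately have "top t = top t'" by (rule top_connected)
  then show "top t = c" using t' by simp
qed

lemma in_branch_top: "t \<in> T \<Longrightarrow> v \<in> bag t \<Longrightarrow> v \<notin> bag r \<Longrightarrow> v \<in> branch (top t)"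
  using bags_sub by (cases "t = r") (auto simp: branch_def)

lemma branch_in_branches: "t \<in> T \<Longrightarrow> v \<in> bag t \<Longrightarrow> v \<notin> bag r \<Longrightarrow> branch (top t) \<in> branches"
  using in_branch_top top_props[of t] by (cases "t = r") (auto simp: branches_def)

lemma branches_cover: "\<Union>branches = V - bag r"
proof
  show "\<Union>branches \<subseteq> V - bag r" using branch_sub by (auto simp: branches_def)
  show "V - bag r \<subseteq> \<Union>branches"
  proof
    fix v assume v: "v \<in> V - bag r"
    then obtain t where "t \<in> T" "v \<in> bag t" using vertex_covered by blast
    then show "v \<in> \<Union>branches" using in_branch_top branch_in_branches v by blast
  qed
qed

lemma branches_disjoint: "p \<in> branches \<Longrightarrow> q \<in> branches \<Longrightarrow> p \<noteq> q \<Longrightarrow> p \<inter> q = {}"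
proof -
  have "branch c \<inter> branch c' = {}" if "branch c \<noteq> branch c'" for c c'
  proof (rule ccontr)
    assume "branch c \<inter> branch c' \<noteq> {}"
    then obtain v where v: "v \<in> branch c" "v \<in> branch c'" by blast
    then obtain t where "t \<in> T" "v \<in> bag t" by (auto simp: branch_def)
    then have "c = c'" using bag_top(2) v by metis
    then show False using that by simp
  qed
  then show "p \<in> branches \<Longrightarrow> q \<in> branches \<Longrightarrow> p \<noteq> q \<Longrightarrow> p \<inter> q = {}"
    by (auto simp: branches_def)
qed

lemma edges_in_branches: "e \<in> E \<Longrightarrow> e \<subseteq> bag r \<or> (\<exists>p\<in>branches. e \<subseteq> bag r \<union> p)"
proof -
  assume "e \<in> E"
  then obtain t where t: "t \<in> T" "e \<subseteq> bag t" using edge_covered by blast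
  show ?thesis
  proof (cases "e \<subseteq> bag r")
    case False
    then obtain w where "w \<in> e" "w \<notin> bag r" by blast
    then have "branch (top t) \<in> branches" using t branch_in_branches by blast
    moreover have "e \<subseteq> bag r \<union> branch (top t)" using t in_branch_top by blast
    ultimately show ?thesis by blast
  qed simp
qed

lemma subtree_height:
  assumes c: "c \<in> T" "c \<noteq> r" "par c = r"
  shows "rooted_tree_height (subtree c) c par h"
  unfolding rooted_tree_height_def
proof (intro conjI ballI)
  show "finite (subtree c)" using finite_T by (simp add: subtree_def)
  show "c \<in> subtree c" using c top_child by (simp add: subtree_def)
next
  fix t assume "t \<in> subtree c - {c}"
  then have t: "t \<in> T" "t \<noteq> r" "top t = c" "t \<noteq> c" by (auto simp: subtree_def)
  have "par t \<noteq> r" using top_child t by metis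
  then show "par t \<in> subtree c" using par_in top_par t by (simp add: subtree_def)
next
  fix t assume "t \<in> subtree c"
  then have t: "t \<in> T" "top t = c" by (auto simp: subtree_def)
  have "depth t - 1 \<le> h" using depth_props(2)[OF t(1)] by simp
  then show "\<exists>d\<le>h. (par ^^ d) t = c" using t(2) unfolding top_def by blast
qed

lemma subtree_decomposition:
  assumes c: "par c = r"
  shows "tree_decomposition (branch c, {e\<in>E. e \<subseteq> branch c}) (subtree c) c par (\<lambda>t. bag t \<inter> branch c)"
  unfolding tree_decomposition_def fst_conv snd_conv
proof (intro conjI ballI)
  fix v assume "v \<in> branch c"
  then show "\<exists>t\<in>subtree c. v \<in> bag t \<inter> branch c" by (auto simp: branch_def subtree_def)
next
  fix e assume e: "e \<in> {e\<in>E. e \<subseteq> branch c}"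
  then obtain t where t: "t \<in> T" "e \<subseteq> bag t" using edge_covered by blast
  obtain u w where "e = {u, w}" using is_graph_edges[OF graph] e by blast
  then have "u \<in> branch c" "u \<in> bag t" using e t by auto
  then have "t \<in> subtree c" using bag_top t(1) by (auto simp: subtree_def)
  then show "\<exists>t\<in>subtree c. e \<subseteq> bag t \<inter> branch c" using t e by blast
next
  fix v assume v: "v \<in> branch c"
  let ?S = "{t\<in>T. v \<in> bag t}"
  have S: "{t\<in>subtree c. v \<in> bag t \<inter> branch c} = ?S"
    using bag_top[OF v] v by (auto simp: subtree_def)
  have "r \<notin> ?S" using v branch_sub by auto
  then have "{(a, b). a \<in> ?S \<and> b \<in> ?S \<and> tree_adj r par a b} \<subseteq> {(a, b). a \<in> ?S \<and> b \<in> ?S \<and> tree_adj c par a b}"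
    using c unfolding tree_adj_def by auto
  moreover have "tree_connected r par ?S" using bags_connected v branch_sub by blast
  ultimately have "tree_connected c par ?S" unfolding tree_connected_def using rtrancl_mono by blast
  then show "tree_connected c par {t\<in>subtree c. v \<in> bag t \<inter> branch c}" using S by simp
qed auto

end

lemma tree_decomposition_sep_dec:
  assumes "rooted_tree_height T r par n" "tree_decomposition (V, E) T r par bag"
    "\<forall>t\<in>T. card (bag t) \<le> k + 1" "is_graph (V, E)"
  shows "sep_dec n k V E"
  using assms
proof (induction n arbitrary: V E T r par bag)
  case 0
  interpret rooted_tree T r par 0 by unfold_locales (rule "0.prems"(1))
  have "t = r" if "t \<in> T" for t using depth_props[OF that] by simp
  then have "V \<subseteq> bag r" using "0.prems"(2) by (auto simp: tree_decomposition_def)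
  moreover have "finite (bag r)" using "0.prems"(2,4) root_in
    by (auto simp: tree_decomposition_def is_graph_def intro: finite_subset)
  ultimately have "card V \<le> card (bag r)" by (rule card_mono[rotated])
  then show ?case using "0.prems"(3) root_in by fastforce
next
  case (Suc h)
  interpret rooted_decomposition T r par h V E bag
    using Suc.prems by unfold_locales auto
  have finite_V: "finite V" using graph by (simp add: is_graph_def)
  have "sep_dec h k (branch c) {e\<in>E. e \<subseteq> branch c}" if "c \<in> T" "c \<noteq> r" "par c = r" for c
  proof (rule Suc.IH[OF subtree_height[OF that] subtree_decomposition[OF that(3)]])
    show "\<forall>t\<in>subtree c. card (bag t \<inter> branch c) \<le> k + 1"
      using Suc.prems(3) bags_sub finite_V
      by (auto simp: subtree_def intro: le_trans[OF card_mono] finite_subset)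
    show "is_graph (branch c, {e\<in>E. e \<subseteq> branch c})"
      using is_graph_induced[OF graph] branch_sub by blast
  qed
  then have "\<forall>p\<in>branches. sep_dec h k p {e\<in>E. e \<subseteq> p}" by (auto simp: branches_def)
  moreover have "bag r \<subseteq> V" "card (bag r) \<le> k + 1" using bags_sub root_in Suc.prems(3) by auto
  moreover have "\<forall>p\<in>branches. p \<noteq> {}" by (simp add: branches_def)
  moreover have "\<forall>p\<in>branches. \<forall>q\<in>branches. p \<noteq> q \<longrightarrow> p \<inter> q = {}"
    using branches_disjoint by blast
  moreover have "\<forall>e\<in>E. e \<subseteq> bag r \<or> (\<exists>p\<in>branches. e \<subseteq> bag r \<union> p)"
    using edges_in_branches by blast
  ultimately show ?case
    using branches_cover unfolding sep_dec.simps
    by (intro exI[of _ "bag r"] exI[of _ branches] conjI) simp_all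
qed

lemma defined_order_automorphism_id:
  assumes fin: "finite A" and PA: "\<forall>i. P i \<subseteq> A"
    and lin: "linear_order_on A {(a, b). a \<in> A \<and> b \<in> A \<and> sat A R (\<lambda>i. if i = 0 then a else b) P \<phi>}"
    and bij: "bij_betw \<sigma> A A" and rel: "\<forall>x\<in>A. \<forall>y\<in>A. R (\<sigma> x) (\<sigma> y) = R x y"
    and fix_P: "\<forall>j\<in>free_set_vars \<phi>. \<sigma> ` P j = P j"
    and a: "a \<in> A"
  shows "\<sigma> a = a"
proof (rule linear_order_automorphism_id[OF fin lin bij _ a])
  have "sat A R (\<lambda>i. if i = 0 then \<sigma> a else \<sigma> b) P \<phi> = sat A R (\<lambda>i. if i = 0 then a else b) P \<phi>"
    if "a \<in> A" "b \<in> A" for a b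
  proof -
    have \<sigma>_comp: "\<sigma> \<circ> (\<lambda>i. if i = 0 then a else b) = (\<lambda>i. if i = 0 then \<sigma> a else \<sigma> b)"
      by auto
    have "sat A R (\<lambda>i. if i = 0 then \<sigma> a else \<sigma> b) P \<phi> =
          sat A R (\<lambda>i. if i = 0 then \<sigma> a else \<sigma> b) (\<lambda>j. \<sigma> ` P j) \<phi>"
      using fix_P by (intro sat_set_vars_cong) simp
    also have "\<dots> = sat A R (\<lambda>i. if i = 0 then a else b) P \<phi>"
      unfolding \<sigma>_comp[symmetric] using that PA by (intro sat_iso[OF bij rel]) auto
    finally show ?thesis .
  qed
  moreover have "\<sigma> x \<in> A" if "x \<in> A" for x using bij that by (rule bij_betw_apply)
  ultimately show "\<forall>a\<in>A. \<forall>b\<in>A. (\<sigma> a, \<sigma> b) \<in> {(a, b). a \<in> A \<and> b \<in> A \<and> sat A R (\<lambda>i. if i = 0 then a else b) P \<phi>}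
      \<longleftrightarrow> (a, b) \<in> {(a, b). a \<in> A \<and> b \<in> A \<and> sat A R (\<lambda>i. if i = 0 then a else b) P \<phi>}"
    by simp
qed

lemma coloured_aut_edge:
  assumes "is_graph (V, E)" "coloured_aut V E col f" "e \<in> E"
  shows "f ` e \<in> E" "col (Inr (f ` e)) = col (Inr e)"
proof -
  obtain u v where uv: "e = {u, v}" "u \<in> V" "v \<in> V" using is_graph_edges assms(1,3) by blast
  then have "edge_colour E col (f u) (f v) = Some (col (Inr e))"
    using assms(2,3) by (simp add: coloured_aut_def edge_colour_def)
  then show "f ` e \<in> E" "col (Inr (f ` e)) = col (Inr e)"
    using uv by (auto simp: edge_colour_def split: if_splits)
qed

lemma incidence_automorphism:
  assumes G: "is_graph (V, E)" and f: "coloured_aut V E col f"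
    and AR: "inc_struct (V, E) = (A, R)"
  defines "\<sigma> \<equiv> map_sum f ((`) f)"
  shows "bij_betw \<sigma> A A" "\<forall>x\<in>A. \<forall>y\<in>A. R (\<sigma> x) (\<sigma> y) = R x y" "\<forall>x\<in>A. col (\<sigma> x) = col x"
proof -
  have A: "A = Inl ` V \<union> Inr ` E" and R: "R = (\<lambda>x y. \<exists>v e. x = Inl v \<and> y = Inr e \<and> v \<in> e)"
    using AR by (auto simp: inc_struct_def)
  have fV: "bij_betw f V V" and inj: "inj_on f V" using f by (auto simp: coloured_aut_def bij_betw_def)
  have EV: "E \<subseteq> Pow V" using is_graph_Pow[OF G] .
  have "\<sigma> ` A \<subseteq> A"
    using bij_betw_apply[OF fV] coloured_aut_edge[OF G f] by (auto simp: A \<sigma>_def)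
  moreover have "inj_on \<sigma> A"
  proof (rule inj_onI)
    fix x y assume xy: "x \<in> A" "y \<in> A" "\<sigma> x = \<sigma> y"
    show "x = y"
    proof (cases x; cases y)
      fix e e' assume "x = Inr e" "y = Inr e'"
      moreover have "e \<subseteq> V" "e' \<subseteq> V" using xy EV calculation by (auto simp: A)
      ultimately show "x = y" using xy inj_on_image_eq_iff[OF inj] by (simp add: \<sigma>_def)
    qed (use xy inj in \<open>auto simp: A \<sigma>_def inj_on_eq_iff\<close>)
  qed
  moreover have "finite A" using G EV finite_subset by (fastforce simp: A is_graph_def)
  ultimately show "bij_betw \<sigma> A A" by (simp add: bij_betw_def endo_inj_surj)
  have "(f v \<in> f ` e) = (v \<in> e)" if "v \<in> V" "e \<in> E" for v e
    using inj_on_image_mem_iff[OF inj that(1)] EV that(2) by blast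
  then show "\<forall>x\<in>A. \<forall>y\<in>A. R (\<sigma> x) (\<sigma> y) = R x y"
    unfolding A by (intro ballI, elim UnE imageE) (simp_all add: R \<sigma>_def)
  show "\<forall>x\<in>A. col (\<sigma> x) = col x"
    using f coloured_aut_edge[OF G f] by (auto simp: A \<sigma>_def coloured_aut_def)
qed

lemma bij_betw_invariant_image:
  assumes "bij_betw \<sigma> A A" "Q \<subseteq> A" "\<forall>x\<in>A. \<sigma> x \<in> Q \<longleftrightarrow> x \<in> Q"
  shows "\<sigma> ` Q = Q"
proof
  show "\<sigma> ` Q \<subseteq> Q" using assms(2,3) by blast
  show "Q \<subseteq> \<sigma> ` Q"
  proof
    fix y assume "y \<in> Q"
    then obtain x where "x \<in> A" "y = \<sigma> x" using assms(1,2) by (auto simp: bij_betw_def)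
    then show "y \<in> \<sigma> ` Q" using assms(3) \<open>y \<in> Q\<close> by blast
  qed
qed

lemma defines_order_rigid_colouring:
  assumes G: "is_graph (V, E)" "V \<noteq> {}" and ord: "defines_order \<phi> K" "inc_struct (V, E) \<in> K"
  shows "\<exists>col. colours_in (to_nat ` {xs :: bool list. length xs = card (free_set_vars \<phi>)}) V E col \<and>
    rigid V E col"
proof -
  obtain A R where AR: "inc_struct (V, E) = (A, R)" by fastforce
  have "A \<noteq> {}" using AR G(2) by (auto simp: inc_struct_def)
  then obtain P where PA: "\<forall>i. P i \<subseteq> A"
    and lin: "linear_order_on A {(a, b). a \<in> A \<and> b \<in> A \<and> sat A R (\<lambda>i. if i = 0 then a else b) P \<phi>}"
    using ord AR unfolding defines_order_def by fastforce
  have fin_A: "finite A" using AR G(1) is_graph_Pow finite_subset by (fastforce simp: inc_struct_def is_graph_def)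
  define Ls where "Ls = sorted_list_of_set (free_set_vars \<phi>)"
  have Ls: "set Ls = free_set_vars \<phi>" "length Ls = card (free_set_vars \<phi>)"
    using finite_free_set_vars by (simp_all add: Ls_def)
  define col where "col x = to_nat (map (\<lambda>j. x \<in> P j) Ls)" for x
  have "rigid V E col"
    unfolding rigid_def
  proof (intro allI impI ballI)
    fix f v assume f: "coloured_aut V E col f" and v: "v \<in> V"
    define \<sigma> where "\<sigma> = map_sum f ((`) f)"
    note \<sigma> = incidence_automorphism[OF G(1) f AR, folded \<sigma>_def]
    have "\<sigma> ` P j = P j" if "j \<in> free_set_vars \<phi>" for j
    proof (rule bij_betw_invariant_image[OF \<sigma>(1) PA[rule_format]], intro ballI)
      fix x assume "x \<in> A"
      then have "map (\<lambda>j. \<sigma> x \<in> P j) Ls = map (\<lambda>j. x \<in> P j) Ls" using \<sigma>(3) by (simp add: col_def)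
      then show "\<sigma> x \<in> P j \<longleftrightarrow> x \<in> P j" using that Ls(1) by (simp add: map_eq_conv)
    qed
    moreover have "Inl v \<in> A" using AR v by (auto simp: inc_struct_def)
    ultimately have "\<sigma> (Inl v) = Inl v"
      using defined_order_automorphism_id[OF fin_A PA lin \<sigma>(1,2)] by blast
    then show "f v = v" by (simp add: \<sigma>_def)
  qed
  moreover have "colours_in (to_nat ` {xs :: bool list. length xs = card (free_set_vars \<phi>)}) V E col"
    using Ls(2) by (simp add: colours_in_def col_def)
  ultimately show ?thesis by blast
qed

lemma orderable_bounded_size:
  fixes C :: "'v graph set"
  assumes C: "\<forall>G\<in>C. is_graph G \<and> depth_tw_le n k G" and ord: "defines_order \<phi> (inc_struct ` C)"
  shows "\<exists>N. \<forall>G\<in>C. card (fst G) \<le> N"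
proof -
  let ?K = "to_nat ` {xs :: bool list. length xs = card (free_set_vars \<phi>)}"
  have "finite ?K" using finite_lists_length_eq[of "UNIV :: bool set"] by simp
  then obtain N where N: "\<forall>(V :: 'v set) E col. finite V \<and> sep_dec n k V E \<and> colours_in ?K V E col \<and>
    rigid V E col \<longrightarrow> card V \<le> N"
    using rigid_sep_dec_bounded by blast
  have "card V \<le> N" if GC: "(V, E) \<in> C" for V E
  proof (cases "V = {}")
    case False
    have G: "is_graph (V, E)" "depth_tw_le n k (V, E)" using C GC by auto
    then have "sep_dec n k V E" using tree_decomposition_sep_dec by (auto simp: depth_tw_le_def)
    moreover obtain col where "colours_in ?K V E col" "rigid V E col"
      using defines_order_rigid_colouring[OF G(1) False ord] GC by blast
    moreover have "finite V" using G(1) by (simp add: is_graph_def)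
    ultimately show ?thesis using N by blast
  qed simp
  then show ?thesis by (metis prod.collapse)
qed

text \<open>Graphs of bounded order fall into finitely many isomorphism classes: each is isomorphic
  to a graph on an initial segment of the naturals.\<close>
lemma bounded_size_finite_upto_iso:
  assumes "\<forall>G\<in>C. is_graph G \<and> card (fst G) \<le> N"
  shows "finite_upto_iso (C :: nat graph set)"
  unfolding finite_upto_iso_def
proof (intro exI conjI ballI)
  show "finite (Pow {0..<N} \<times> Pow (Pow {0..<N}))" by simp
next
  fix G assume G: "G \<in> C"
  obtain V E where GVE: "G = (V, E)" by (cases G)
  have gr: "is_graph (V, E)" and cV: "card V \<le> N" using assms G GVE by auto
  have finV: "finite V" and EV: "E \<subseteq> Pow V" using gr is_graph_Pow by (auto simp: is_graph_def)
  obtain \<beta> where \<beta>: "bij_betw \<beta> V {0..<card V}" using ex_bij_betw_finite_nat[OF finV] by blast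
  have inj: "inj_on \<beta> V" and \<beta>V: "\<beta> ` V = {0..<card V}" using \<beta> by (auto simp: bij_betw_def)
  define H where "H = ({0..<card V}, (`) \<beta> ` E)"
  have "\<beta> ` e \<subseteq> {0..<N}" if "e \<in> E" for e
  proof -
    have "\<beta> ` e \<subseteq> \<beta> ` V" using EV that by (intro image_mono) blast
    then show ?thesis using \<beta>V cV by auto
  qed
  then have "H \<in> Pow {0..<N} \<times> Pow (Pow {0..<N})" using cV by (auto simp: H_def)
  moreover have "graph_iso G H"
    unfolding graph_iso_def GVE H_def fst_conv snd_conv
  proof (intro exI conjI ballI)
    fix u v assume uv: "u \<in> V" "v \<in> V"
    show "{u, v} \<in> E \<longleftrightarrow> {\<beta> u, \<beta> v} \<in> (`) \<beta> ` E"
    proof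
      assume "{u, v} \<in> E"
      then show "{\<beta> u, \<beta> v} \<in> (`) \<beta> ` E" by (metis image_empty image_insert image_eqI)
    next
      assume "{\<beta> u, \<beta> v} \<in> (`) \<beta> ` E"
      then obtain e where e: "e \<in> E" "\<beta> ` e = \<beta> ` {u, v}" by auto
      moreover have "e \<subseteq> V" "{u, v} \<subseteq> V" using EV e(1) uv by auto
      ultimately show "{u, v} \<in> E" using inj_on_image_eq_iff[OF inj] by metis
    qed
  qed (rule \<beta>)
  ultimately show "\<exists>H\<in>Pow {0..<N} \<times> Pow (Pow {0..<N}). graph_iso G H" by blast
qed

text \<open>The formula \<open>\<And>j<M. x\<^sub>1 \<in> Z\<^sub>j \<longrightarrow> x\<^sub>0 \<in> Z\<^sub>j\<close>: with \<open>Z\<^sub>j\<close> the first \<open>j + 1\<close> elements of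
  an enumeration, it defines that enumeration's order on every structure of size at most \<open>M\<close>.\<close>
fun conjs :: "mso list \<Rightarrow> mso" where
  "conjs [] = Eq 0 0"
| "conjs (\<phi> # \<phi>s) = Conj \<phi> (conjs \<phi>s)"

definition prefix_order :: "nat \<Rightarrow> mso" where
  "prefix_order M = conjs (map (\<lambda>j. Neg (Conj (Mem 1 j) (Neg (Mem 0 j)))) [0..<M])"

lemma sat_conjs: "sat A R f F (conjs \<phi>s) \<longleftrightarrow> (\<forall>\<phi>\<in>set \<phi>s. sat A R f F \<phi>)"
  by (induction \<phi>s) auto

lemma free1_conjs: "\<forall>\<phi>\<in>set \<phi>s. free1 \<phi> \<subseteq> {0, 1} \<Longrightarrow> free1 (conjs \<phi>s) \<subseteq> {0, 1}"
  by (induction \<phi>s) auto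

lemma sat_prefix_order: "sat A R f P (prefix_order M) \<longleftrightarrow> (\<forall>j<M. f 1 \<in> P j \<longrightarrow> f 0 \<in> P j)"
  by (auto simp: prefix_order_def sat_conjs)

lemma free1_prefix_order: "free1 (prefix_order M) \<subseteq> {0, 1}"
  unfolding prefix_order_def by (rule free1_conjs) auto

lemma prefix_order_linear:
  assumes "finite A" "card A \<le> M"
  shows "\<exists>P. (\<forall>i. P i \<subseteq> A) \<and>
    linear_order_on A {(a, b). a \<in> A \<and> b \<in> A \<and> sat A R (\<lambda>i. if i = 0 then a else b) P (prefix_order M)}"
proof -
  obtain \<beta> where \<beta>: "bij_betw \<beta> A {0..<card A}" using ex_bij_betw_finite_nat[OF assms(1)] by blast
  define P where "P j = {a\<in>A. \<beta> a \<le> j}" for j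
  have "(\<forall>j<M. b \<in> P j \<longrightarrow> a \<in> P j) \<longleftrightarrow> \<beta> a \<le> \<beta> b" if ab: "a \<in> A" "b \<in> A" for a b
  proof
    assume "\<forall>j<M. b \<in> P j \<longrightarrow> a \<in> P j"
    moreover have "\<beta> b < M" using bij_betw_apply[OF \<beta> ab(2)] assms(2) by simp
    ultimately show "\<beta> a \<le> \<beta> b" using ab by (simp add: P_def)
  qed (use ab in \<open>simp add: P_def\<close>)
  then have L: "{(a, b). a \<in> A \<and> b \<in> A \<and> sat A R (\<lambda>i. if i = 0 then a else b) P (prefix_order M)} =
      {(a, b). a \<in> A \<and> b \<in> A \<and> \<beta> a \<le> \<beta> b}"
    by (auto simp: sat_prefix_order)
  have "inj_on \<beta> A" using \<beta> by (rule bij_betw_imp_inj_on)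
  then have "linear_order_on A {(a, b). a \<in> A \<and> b \<in> A \<and> \<beta> a \<le> \<beta> b}"
    unfolding linear_order_on_def partial_order_on_def preorder_on_def
    by (auto simp: refl_on_def trans_def antisym_def total_on_def inj_on_eq_iff)
  then have "linear_order_on A
      {(a, b). a \<in> A \<and> b \<in> A \<and> sat A R (\<lambda>i. if i = 0 then a else b) P (prefix_order M)}"
    unfolding L .
  moreover have "\<forall>i. P i \<subseteq> A" by (simp add: P_def)
  ultimately show ?thesis by blast
qed

text \<open>Conversely, a class that is finite up to isomorphism has bounded incidence structures,
  so the prefix formula orders all of them.\<close>
lemma finite_upto_iso_orderable:
  fixes C :: "'v graph set"
  assumes C: "\<forall>G\<in>C. is_graph G" and fin: "finite_upto_iso C"
  shows "MSO2_orderable C"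
proof -
  obtain F :: "'v graph set" where F: "finite F" "\<forall>G\<in>C. \<exists>H\<in>F. graph_iso G H"
    using fin by (auto simp: finite_upto_iso_def)
  define M where "M = (\<Sum>H\<in>F. card (fst H) + 2 ^ card (fst H))"
  have bound: "card (fst (inc_struct (V, E))) \<le> M" if GC: "(V, E) \<in> C" for V E
  proof -
    obtain H where H: "H \<in> F" "graph_iso (V, E) H" using F GC by blast
    have "card V = card (fst H)" using H(2) by (auto simp: graph_iso_def bij_betw_same_card)
    moreover have "is_graph (V, E)" using C GC by blast
    ultimately have "card (fst (inc_struct (V, E))) \<le> card (fst H) + 2 ^ card (fst H)"
      using is_graph_card_inc_struct by metis
    also have "\<dots> \<le> M" unfolding M_def using H F by (intro member_le_sum) auto
    finally show ?thesis .
  qed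
  have finite: "finite (fst (inc_struct (V, E)))" if GC: "(V, E) \<in> C" for V E
  proof -
    have "is_graph (V, E)" using C GC by blast
    then have "finite V" "E \<subseteq> Pow V" using is_graph_Pow by (auto simp: is_graph_def)
    then show ?thesis by (auto simp: inc_struct_def intro: finite_subset)
  qed
  have "defines_order (prefix_order M) (inc_struct ` C)"
    unfolding defines_order_def
  proof (intro conjI free1_prefix_order ballI)
    fix AR assume "AR \<in> inc_struct ` C"
    then obtain V E where GC: "(V, E) \<in> C" and AR: "AR = inc_struct (V, E)" by auto
    obtain A R where "AR = (A, R)" by fastforce
    then show "case AR of (A, R) \<Rightarrow> A \<noteq> {} \<longrightarrow> (\<exists>P. (\<forall>i. P i \<subseteq> A) \<and>
        linear_order_on A {(a, b). a \<in> A \<and> b \<in> A \<and> sat A R (\<lambda>i. if i = 0 then a else b) P (prefix_order M)})"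
      using prefix_order_linear[OF finite[OF GC] bound[OF GC]] AR by simp
  qed
  then show ?thesis unfolding MSO2_orderable_def by blast
qed

text \<open>The edgeless graphs have depth-1 tree decompositions of width 0 (a root with empty
  bag and one leaf per vertex), and they are pairwise non-isomorphic.\<close>
definition edgeless :: "nat \<Rightarrow> nat graph" where
  "edgeless m = ({0..<m}, {})"

lemma edgeless_depth_tw:
  assumes "1 \<le> n"
  shows "is_graph (edgeless m) \<and> depth_tw_le n k (edgeless m)"
proof
  show "is_graph (edgeless m)" by (simp add: edgeless_def is_graph_def)
  define bag where "bag t = (if t = 0 then {} else {t - 1})" for t :: nat
  have "rooted_tree_height {0..m} 0 (\<lambda>_. 0) n"
    unfolding rooted_tree_height_def
  proof (intro conjI ballI)
    fix t :: nat
    have "((\<lambda>_. 0::nat) ^^ (if t = 0 then 0 else 1)) t = 0" by simp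
    then show "\<exists>d\<le>n. ((\<lambda>_. 0::nat) ^^ d) t = 0" using assms by (metis le0)
  qed auto
  moreover have "tree_decomposition (edgeless m) {0..m} 0 (\<lambda>_. 0) bag"
    unfolding tree_decomposition_def edgeless_def fst_conv snd_conv
  proof (intro conjI ballI)
    fix v assume "v \<in> {0..<m}"
    then show "\<exists>t\<in>{0..m}. v \<in> bag t" by (intro bexI[of _ "Suc v"]) (auto simp: bag_def)
    have "{t \<in> {0..m}. v \<in> bag t} = {Suc v}" using \<open>v \<in> {0..<m}\<close> by (auto simp: bag_def)
    then show "tree_connected 0 (\<lambda>_. 0) {t \<in> {0..m}. v \<in> bag t}" by (simp add: tree_connected_def)
  qed (auto simp: bag_def)
  moreover have "\<forall>t\<in>{0..m}. card (bag t) \<le> k + 1" by (simp add: bag_def)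
  ultimately show "depth_tw_le n k (edgeless m)" unfolding depth_tw_le_def by blast
qed

lemma edgeless_not_finite_upto_iso:
  assumes "range edgeless \<subseteq> C"
  shows "\<not> finite_upto_iso C"
proof
  assume "finite_upto_iso C"
  then obtain F :: "nat graph set" where F: "finite F" "\<forall>G\<in>C. \<exists>H\<in>F. graph_iso G H"
    by (auto simp: finite_upto_iso_def)
  have "m \<in> (\<lambda>H. card (fst H)) ` F" for m
  proof -
    obtain H where "H \<in> F" "graph_iso (edgeless m) H" using F assms by blast
    then show ?thesis by (force simp: graph_iso_def edgeless_def dest: bij_betw_same_card)
  qed
  then have "finite (UNIV :: nat set)" using F(1) by (metis finite_imageI finite_subset subsetI)
  then show False by simp
qed

lemma bounded_depth_tw_orderable_iff_finite:
  fixes C :: "nat graph set"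
  assumes C: "\<forall>G\<in>C. is_graph G \<and> depth_tw_le n k G"
  shows "MSO2_orderable C \<longleftrightarrow> finite_upto_iso C"
proof
  assume "MSO2_orderable C"
  then obtain \<phi> where "defines_order \<phi> (inc_struct ` C)" by (auto simp: MSO2_orderable_def)
  then obtain N where "\<forall>G\<in>C. card (fst G) \<le> N" using orderable_bounded_size[OF C] by blast
  then show "finite_upto_iso C" using C by (intro bounded_size_finite_upto_iso) blast
next
  assume "finite_upto_iso C"
  then show "MSO2_orderable C" using C by (intro finite_upto_iso_orderable) auto
qed

theorem proposition4p15:
  fixes n k :: nat
  shows "(\<forall>C :: nat graph set. (\<forall>G\<in>C. is_graph G \<and> depth_tw_le n k G) \<longrightarrow>
            (MSO2_orderable C \<longleftrightarrow> finite_upto_iso C))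
       \<and> (1 \<le> n \<longrightarrow>
            hereditarily_MSO2_unorderable {G :: nat graph. is_graph G \<and> depth_tw_le n k G})"
proof (intro conjI allI impI)
  show "MSO2_orderable C \<longleftrightarrow> finite_upto_iso C"
    if "\<forall>G\<in>C. is_graph G \<and> depth_tw_le n k G" for C :: "nat graph set"
    using that by (rule bounded_depth_tw_orderable_iff_finite)
  assume "1 \<le> n"
  then have "range edgeless \<subseteq> {G. is_graph G \<and> depth_tw_le n k G}"
    using edgeless_depth_tw by blast
  then show "hereditarily_MSO2_unorderable {G :: nat graph. is_graph G \<and> depth_tw_le n k G}"
    unfolding hereditarily_MSO2_unorderable_def
    using edgeless_not_finite_upto_iso bounded_depth_tw_orderable_iff_finite by blast
qed

end
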